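(* Let $x_j$ be a real random variable and $\boldsymbol{x}_C$ a random vector independent of $x_j$. If $f(x_j,\boldsymbol{x}_C)=g_1(x_j)h_1(\boldsymbol{x}_C)+\cdots+g_k(x_j)h_k(\boldsymbol{x}_C)$, where $g_1,\dots,g_k$ are functions of $x_j$ only and $h_1,\dots,h_k$ are functions of $\boldsymbol{x}_C$ only, then $$\mathbb{E}_{\boldsymbol{x}_C}\big[I_{ice}(x_j;\boldsymbol{x}_C)\big]\ge I_{pdp}(x_j).$$
   Context: Inputs are $\boldsymbol{x}=(x_1,\dots,x_m)$ with independent components; $C=\{1,\dots,m\}\setminus\{j\}$ and $\boldsymbol{x}_C$ denotes the vector of the inputs with indices in $C$. $\mathbb{E}_{z}$ and $\mathbb{V}_{z}$ denote expectation and variance taken with respect to the random variable $z$ only, the other arguments being held fixed. For a fixed value of $\boldsymbol{x}_C$, the ICE importance is $I_{ice}(x_j;\boldsymbol{x}_C)=\sqrt{\mathbb{V}_{x_j}[f(x_j,\boldsymbol{x}_C)]}$. The PDP importance is $I_{pdp}(x_j)=\sqrt{\mathbb{V}_{x_j}\big[\mathbb{E}_{\boldsymbol{x}_C}[f(x_j,\boldsymbol{x}_C)]\big]}$. All expectations, variances and covariances involved are assumed to exist and be finite. *)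

theory Defs
  imports "HOL-Probability.Probability"
begin

text \<open>Mj is the distribution of the real input x_j, MC the distribution of the
  vector x_C of the remaining inputs (values in an arbitrary measurable space).
  Independence of x_j and x_C means their joint law is the product Mj x MC,
  so all quantities below are expressed through the two marginals.\<close>

definition ice_imp :: "real measure \<Rightarrow> (real \<Rightarrow> 'c \<Rightarrow> real) \<Rightarrow> 'c \<Rightarrow> real" where
  "ice_imp Mj f c = sqrt (prob_space.variance Mj (\<lambda>x. f x c))"

definition pdp_imp :: "real measure \<Rightarrow> 'c measure \<Rightarrow> (real \<Rightarrow> 'c \<Rightarrow> real) \<Rightarrow> real" where
  "pdp_imp Mj MC f = sqrt (prob_space.variance Mj (\<lambda>x. prob_space.expectation MC (\<lambda>c. f x c)))"

end

theory Submission
  imports Defs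
begin

text \<open>Let S be the covariance matrix of g 0, ..., g (k - 1) under Mj and q its quadratic form,
  which is positive semidefinite. Then the ICE importance at c is sqrt (q (h c)) and the PDP
  importance is sqrt (q (E h)), so the theorem is Jensen's inequality for the seminorm sqrt o q.
  It follows from Cauchy--Schwarz for q: writing B for the bilinear form of S,
  q (E h) = E (B h (E h)) \<le> E (sqrt (q h)) * sqrt (q (E h)).\<close>

lemma nonneg_quadratic_imp_discriminant_le:
  fixes a b c :: real
  assumes nonneg: "\<And>t. 0 \<le> a * t\<^sup>2 + 2 * b * t + c" and "0 \<le> a"
  shows "b\<^sup>2 \<le> a * c"
proof (cases "a = 0")
  case True
  have "b = 0"
  proof (rule ccontr)
    assume "b \<noteq> 0"
    with nonneg[of "- (c + 1) / (2 * b)"] True show False by (simp add: field_simps)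
  qed
  then show ?thesis using True by simp
next
  case False
  with \<open>0 \<le> a\<close> have "0 < a" by simp
  have "0 \<le> a * (- b / a)\<^sup>2 + 2 * b * (- b / a) + c" by (rule nonneg)
  also have "\<dots> = (a * c - b\<^sup>2) / a"
    using \<open>0 < a\<close> by (simp add: field_simps power2_eq_square)
  finally show ?thesis using \<open>0 < a\<close> by (simp add: zero_le_divide_iff)
qed

definition mat_form :: "(nat \<Rightarrow> nat \<Rightarrow> real) \<Rightarrow> nat \<Rightarrow> (nat \<Rightarrow> real) \<Rightarrow> (nat \<Rightarrow> real) \<Rightarrow> real"
  where "mat_form S k u v = (\<Sum>i<k. \<Sum>j<k. u i * v j * S i j)"

lemma mat_form_commute:
  assumes "\<And>i j. S i j = S j i"
  shows "mat_form S k u v = mat_form S k v u"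
  unfolding mat_form_def
  by (subst sum.swap) (simp add: assms mult.commute mult.left_commute)

lemma mat_form_add_scaled:
  assumes "\<And>i j. S i j = S j i"
  shows "mat_form S k (\<lambda>i. u i + t * v i) (\<lambda>i. u i + t * v i)
         = mat_form S k v v * t\<^sup>2 + 2 * mat_form S k u v * t + mat_form S k u u"
proof -
  have "mat_form S k (\<lambda>i. u i + t * v i) (\<lambda>i. u i + t * v i)
      = mat_form S k u u + t * mat_form S k u v + t * mat_form S k v u + t\<^sup>2 * mat_form S k v v"
    unfolding mat_form_def
    by (simp add: algebra_simps sum.distrib sum_distrib_left power2_eq_square)
  then show ?thesis using mat_form_commute[of S k v u, OF assms] by (simp add: algebra_simps)
qed

lemma mat_form_Cauchy_Schwarz:
  assumes sym: "\<And>i j. S i j = S j i" and psd: "\<And>w. 0 \<le> mat_form S k w w"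
  shows "mat_form S k u v \<le> sqrt (mat_form S k u u) * sqrt (mat_form S k v v)"
proof -
  have "(mat_form S k u v)\<^sup>2 \<le> mat_form S k v v * mat_form S k u u"
  proof (rule nonneg_quadratic_imp_discriminant_le)
    show "0 \<le> mat_form S k v v * t\<^sup>2 + 2 * mat_form S k u v * t + mat_form S k u u" for t
      using psd[of "\<lambda>i. u i + t * v i"] by (simp add: mat_form_add_scaled[OF sym])
  qed (rule psd)
  then have "\<bar>mat_form S k u v\<bar> \<le> sqrt (mat_form S k u u * mat_form S k v v)"
    by (metis mult.commute real_sqrt_abs real_sqrt_le_mono)
  then show ?thesis by (simp add: real_sqrt_mult)
qed

lemma sqrt_mat_form_le_sum_abs:
  "sqrt (mat_form S k u u) \<le> (\<Sum>i<k. \<bar>u i\<bar>) * sqrt (\<Sum>i<k. \<Sum>j<k. \<bar>S i j\<bar>)"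
proof -
  let ?s = "\<Sum>i<k. \<bar>u i\<bar>"
  have u_le: "\<bar>u i\<bar> \<le> ?s" if "i < k" for i
    using that by (intro member_le_sum) auto
  have "mat_form S k u u \<le> (\<Sum>i<k. \<Sum>j<k. \<bar>u i\<bar> * \<bar>u j\<bar> * \<bar>S i j\<bar>)"
    unfolding mat_form_def by (intro sum_mono) (simp add: abs_mult[symmetric])
  also have "\<dots> \<le> (\<Sum>i<k. \<Sum>j<k. ?s * ?s * \<bar>S i j\<bar>)"
    by (intro sum_mono mult_right_mono mult_mono u_le) auto
  also have "\<dots> = ?s\<^sup>2 * (\<Sum>i<k. \<Sum>j<k. \<bar>S i j\<bar>)"
    by (simp add: sum_distrib_left power2_eq_square)
  finally have "sqrt (mat_form S k u u) \<le> sqrt (?s\<^sup>2 * (\<Sum>i<k. \<Sum>j<k. \<bar>S i j\<bar>))"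
    by (rule real_sqrt_le_mono)
  also have "\<dots> = ?s * sqrt (\<Sum>i<k. \<Sum>j<k. \<bar>S i j\<bar>)"
    by (simp add: real_sqrt_mult sum_nonneg)
  finally show ?thesis .
qed

lemma integrable_sqrt_mat_form:
  assumes psd: "\<And>w. 0 \<le> mat_form S k w w" and h: "\<And>i. i < k \<Longrightarrow> integrable M (h i)"
  shows "integrable M (\<lambda>c. sqrt (mat_form S k (\<lambda>i. h i c) (\<lambda>i. h i c)))"
proof (rule Bochner_Integration.integrable_bound)
  define T where "T = sqrt (\<Sum>i<k. \<Sum>j<k. \<bar>S i j\<bar>)"
  show "integrable M (\<lambda>c. (\<Sum>i<k. \<bar>h i c\<bar>) * T)"
    using h by (intro integrable_mult_left Bochner_Integration.integrable_sum integrable_abs) auto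
  show "(\<lambda>c. sqrt (mat_form S k (\<lambda>i. h i c) (\<lambda>i. h i c))) \<in> borel_measurable M"
    unfolding mat_form_def using h by measurable
  have "0 \<le> T" unfolding T_def by (simp add: sum_nonneg)
  then show "AE c in M. norm (sqrt (mat_form S k (\<lambda>i. h i c) (\<lambda>i. h i c)))
                         \<le> norm ((\<Sum>i<k. \<bar>h i c\<bar>) * T)"
    using sqrt_mat_form_le_sum_abs[of S k] psd by (auto simp: abs_mult sum_nonneg T_def)
qed

lemma integral_mat_form_left:
  assumes "\<And>i. i < k \<Longrightarrow> integrable M (h i)"
  shows "(\<integral>c. mat_form S k (\<lambda>i. h i c) v \<partial>M) = mat_form S k (\<lambda>i. \<integral>c. h i c \<partial>M) v"
  unfolding mat_form_def using assms
  by (simp add: Bochner_Integration.integral_sum Bochner_Integration.integrable_sum)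

lemma integrable_mult_of_square_integrable:
  fixes X Y :: "'a \<Rightarrow> real"
  assumes [measurable]: "X \<in> borel_measurable M" "Y \<in> borel_measurable M"
    and "integrable M (\<lambda>x. (X x)\<^sup>2)" "integrable M (\<lambda>x. (Y x)\<^sup>2)"
  shows "integrable M (\<lambda>x. X x * Y x)"
proof (rule Bochner_Integration.integrable_bound)
  show "integrable M (\<lambda>x. (X x)\<^sup>2 + (Y x)\<^sup>2)" using assms by auto
  have "\<bar>X x * Y x\<bar> \<le> (X x)\<^sup>2 + (Y x)\<^sup>2" for x
  proof -
    have "2 * \<bar>X x\<bar> * \<bar>Y x\<bar> \<le> (X x)\<^sup>2 + (Y x)\<^sup>2"
      using sum_squares_bound[of "\<bar>X x\<bar>" "\<bar>Y x\<bar>"] by simp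
    moreover have "0 \<le> \<bar>X x\<bar> * \<bar>Y x\<bar>" by simp
    ultimately show ?thesis unfolding abs_mult by linarith
  qed
  then show "AE x in M. norm (X x * Y x) \<le> norm ((X x)\<^sup>2 + (Y x)\<^sup>2)" by simp
qed simp

context prob_space
begin

definition covariance :: "('a \<Rightarrow> real) \<Rightarrow> ('a \<Rightarrow> real) \<Rightarrow> real"
  where "covariance X Y = expectation (\<lambda>x. (X x - expectation X) * (Y x - expectation Y))"

lemma covariance_commute: "covariance X Y = covariance Y X"
  unfolding covariance_def by (simp add: mult.commute)

lemma variance_linear_combination:
  assumes Xm [measurable]: "\<And>i. i < k \<Longrightarrow> X i \<in> borel_measurable M"
    and X2: "\<And>i. i < k \<Longrightarrow> integrable M (\<lambda>x. (X i x)\<^sup>2)"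
  shows "variance (\<lambda>x. \<Sum>i<k. v i * X i x) = mat_form (\<lambda>i j. covariance (X i) (X j)) k v v"
proof -
  define D where "D i x = X i x - expectation (X i)" for i x
  have X_integrable: "integrable M (X i)" if "i < k" for i
    by (rule square_integrable_imp_integrable) (simp_all add: that Xm X2)
  have D_square_integrable: "integrable M (\<lambda>x. (D i x)\<^sup>2)" if "i < k" for i
    unfolding D_def power2_diff using X2[OF that] X_integrable[OF that]
    by (intro Bochner_Integration.integrable_diff Bochner_Integration.integrable_add
        integrable_mult_right integrable_mult_left) auto
  have DD_integrable: "integrable M (\<lambda>x. D i x * D j x)" if "i < k" "j < k" for i j
    using that D_square_integrable by (intro integrable_mult_of_square_integrable) (auto simp: D_def)
  have "expectation (\<lambda>x. \<Sum>i<k. v i * X i x) = (\<Sum>i<k. v i * expectation (X i))"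
    using X_integrable by (simp add: Bochner_Integration.integral_sum)
  then have centred: "(\<Sum>i<k. v i * X i x) - expectation (\<lambda>x. \<Sum>i<k. v i * X i x)
                       = (\<Sum>i<k. v i * D i x)" for x
    by (simp add: D_def sum_subtractf right_diff_distrib)
  have "variance (\<lambda>x. \<Sum>i<k. v i * X i x) = expectation (\<lambda>x. (\<Sum>i<k. v i * D i x)\<^sup>2)"
    by (simp only: centred)
  also have "\<dots> = expectation (\<lambda>x. \<Sum>i<k. \<Sum>j<k. v i * v j * (D i x * D j x))"
    by (simp add: power2_eq_square sum_product algebra_simps)
  also have "\<dots> = (\<Sum>i<k. \<Sum>j<k. v i * v j * expectation (\<lambda>x. D i x * D j x))"
    using DD_integrable by (subst Bochner_Integration.integral_sum)
      (auto intro!: Bochner_Integration.integrable_sum simp: Bochner_Integration.integral_sum)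
  finally show ?thesis
    unfolding mat_form_def covariance_def D_def .
qed

lemma sqrt_mat_form_expectation_le:
  assumes sym: "\<And>i j. S i j = S j i" and psd: "\<And>w. 0 \<le> mat_form S k w w"
    and h: "\<And>i. i < k \<Longrightarrow> integrable M (h i)"
  shows "sqrt (mat_form S k (\<lambda>i. expectation (h i)) (\<lambda>i. expectation (h i)))
         \<le> expectation (\<lambda>c. sqrt (mat_form S k (\<lambda>i. h i c) (\<lambda>i. h i c)))"
proof -
  define a where "a = (\<lambda>i. expectation (h i))"
  define N where "N = (\<lambda>c. sqrt (mat_form S k (\<lambda>i. h i c) (\<lambda>i. h i c)))"
  let ?r = "sqrt (mat_form S k a a)"
  have "?r\<^sup>2 = expectation (\<lambda>c. mat_form S k (\<lambda>i. h i c) a)"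
    using psd[of a] h by (simp add: a_def integral_mat_form_left)
  also have "\<dots> \<le> expectation (\<lambda>c. N c * ?r)"
  proof (rule integral_mono)
    show "integrable M (\<lambda>c. mat_form S k (\<lambda>i. h i c) a)"
      unfolding mat_form_def using h
      by (intro Bochner_Integration.integrable_sum integrable_mult_left) auto
    show "integrable M (\<lambda>c. N c * ?r)"
      unfolding N_def using psd h by (intro integrable_mult_left integrable_sqrt_mat_form)
    show "mat_form S k (\<lambda>i. h i c) a \<le> N c * ?r" for c
      unfolding N_def by (rule mat_form_Cauchy_Schwarz[OF sym psd])
  qed
  also have "\<dots> = expectation N * ?r" by simp
  finally have "?r * ?r \<le> expectation N * ?r" by (simp add: power2_eq_square)
  moreover have "0 \<le> expectation N"
    unfolding N_def by (intro Bochner_Integration.integral_nonneg) (simp add: psd)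
  ultimately have "?r \<le> expectation N"
    using real_sqrt_ge_zero[OF psd[of a]] by (metis mult_right_le_imp_le order_le_less)
  then show ?thesis unfolding a_def N_def .
qed

end

theorem theorem3:
  fixes Mj :: "real measure" and MC :: "'c measure"
    and f :: "real \<Rightarrow> 'c \<Rightarrow> real"
    and g :: "nat \<Rightarrow> real \<Rightarrow> real" and h :: "nat \<Rightarrow> 'c \<Rightarrow> real" and k :: nat
  assumes "prob_space Mj" and "prob_space MC"
    and "\<And>i. i < k \<Longrightarrow> g i \<in> borel_measurable Mj"
    and "\<And>i. i < k \<Longrightarrow> integrable Mj (g i)"
    and "\<And>i. i < k \<Longrightarrow> integrable Mj (\<lambda>x. (g i x)\<^sup>2)"
    and "\<And>i. i < k \<Longrightarrow> h i \<in> borel_measurable MC"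
    and "\<And>i. i < k \<Longrightarrow> integrable MC (h i)"
    and "f = (\<lambda>x c. \<Sum>i<k. g i x * h i c)"
  shows "prob_space.expectation MC (\<lambda>c. ice_imp Mj f c) \<ge> pdp_imp Mj MC f"
proof -
  interpret Mj: prob_space Mj by fact
  interpret MC: prob_space MC by fact
  define S where "S i j = Mj.covariance (g i) (g j)" for i j
  have var: "Mj.variance (\<lambda>x. \<Sum>i<k. v i * g i x) = mat_form S k v v" for v
    unfolding S_def using assms(3,5) by (rule Mj.variance_linear_combination)
  have ice: "ice_imp Mj f c = sqrt (mat_form S k (\<lambda>i. h i c) (\<lambda>i. h i c))" for c
    unfolding ice_imp_def assms(8) var[symmetric] by (simp add: mult.commute)
  have "MC.expectation (f x) = (\<Sum>i<k. MC.expectation (h i) * g i x)" for x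
    unfolding assms(8) using assms(7) by (simp add: Bochner_Integration.integral_sum mult.commute)
  then have pdp: "pdp_imp Mj MC f
      = sqrt (mat_form S k (\<lambda>i. MC.expectation (h i)) (\<lambda>i. MC.expectation (h i)))"
    unfolding pdp_imp_def var[symmetric] by simp
  have S_commute: "S i j = S j i" for i j
    unfolding S_def by (rule Mj.covariance_commute)
  have S_psd: "0 \<le> mat_form S k w w" for w
    unfolding var[symmetric] by (rule Mj.variance_positive)
  show ?thesis
    unfolding ice pdp using S_commute S_psd assms(7) by (rule MC.sqrt_mat_form_expectation_le)
qed

end
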